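(* Consider the discrete-time system $x(t+1) = A x(t) + B u(t) + C v(t) + w$ with $A \in \mathbb{R}^{d_x\times d_x}$, $B\in\mathbb{R}^{d_x\times d_u}$, $C \in\mathbb{R}^{d_x\times d_v}$, constant $w\in\mathbb{R}^{d_x}$, and disturbance $v(s) \in \mathcal V = \langle c_{\mathcal V}\mid G_{\mathcal V}\rangle$ with $G_{\mathcal V}\in\mathbb{R}^{d_v\times n_{\mathcal V}}$. Let $G_{\mathcal I} \in \mathbb{R}^{d_x\times n_{\mathcal I}}$, $\alpha \in \mathbb{R}^{d_x}$, $\gamma\in\mathbb{R}^{n_{\mathcal I}}$ with $\gamma \geq 0$, $\Gamma = \mathrm{diag}(\gamma)$, $\mathcal I = \langle \alpha \mid G_{\mathcal I}\Gamma\rangle$. For $s = 0,\ldots,t-1$ let $\beta(s)\in\mathbb{R}^{d_u}$, $\Phi(s)\in\mathbb{R}^{d_u\times n_{\mathcal I}}$, $G_{\mathcal F(s)}\in\mathbb{R}^{d_u\times m_s}$, $\psi(s)\in\mathbb{R}^{m_s}$ with $\psi(s)\geq 0$, $\Psi(s) = \mathrm{diag}(\psi(s))$. Define the reach set $\mathcal R_t(\mathcal I)$ as the set of states $x(t)$ obtained from $x(0) = \alpha + G_{\mathcal I}\Gamma\lambda$, inputs $u(s) = \beta(s) + \Phi(s)\lambda + G_{\mathcal F(s)}\Psi(s)\rho(s)$ and disturbances $v(s) \in\mathcal V$, $s = 0,\ldots,t-1$, as $\lambda$ ranges over $[-1,1]^{n_{\mathcal I}}$, each $\rho(s)$ over $[-1,1]^{m_s}$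 and each $v(s)$ over $\mathcal V$. Then $\mathcal R_t(\mathcal I)$ is the zonotope with $n_{\mathcal I} + \sum_{s=0}^{t-1}m_s + t\,n_{\mathcal V}$ generators, center \[ A^t\alpha + \sum_{s=0}^{t-1}A^{t-1-s}\big(B\beta(s) + Cc_{\mathcal V} + w\big), \] and generator matrix \[ \big[\,F_{\mathcal I}\ \ F_0\ \ F_1\ \cdots\ F_{t-1}\ \ A^{t-1}CG_{\mathcal V}\ \ A^{t-2}CG_{\mathcal V}\ \cdots\ CG_{\mathcal V}\,\big], \] where $F_{\mathcal I} = A^tG_{\mathcal I}\Gamma + \sum_{s=0}^{t-1}A^{t-1-s}B\Phi(s)$ and $F_s = A^{t-1-s}BG_{\mathcal F(s)}\Psi(s)$ for $s = 0,\ldots,t-1$.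
   Context: The notation $\langle c \mid G\rangle$ denotes the zonotope $\{c + G\lambda : \lambda \in [-1,1]^n\}$ with center $c$ and generator matrix $G$. $\mathrm{diag}(\gamma)$ is the diagonal matrix with $\gamma$ on its diagonal; $[M_1\ M_2\ \cdots]$ denotes horizontal concatenation. *)

theory Defs
  imports Complex_Main "Jordan_Normal_Form.Matrix"
begin

definition zonotope :: "real vec \<Rightarrow> real mat \<Rightarrow> real vec set" where
  "zonotope c G = {c + G *\<^sub>v lam | lam. lam \<in> carrier_vec (dim_col G) \<and>
                                      (\<forall>j < dim_col G. \<bar>lam $ j\<bar> \<le> 1)}"

definition unit_box :: "nat \<Rightarrow> real vec set" where
  "unit_box n = {lam. lam \<in> carrier_vec n \<and> (\<forall>j < n. \<bar>lam $ j\<bar> \<le> 1)}"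

definition diag_of_vec :: "real vec \<Rightarrow> real mat" where
  "diag_of_vec g = mat_diag (dim_vec g) (\<lambda>i. g $ i)"

definition hcat :: "nat \<Rightarrow> real mat list \<Rightarrow> real mat" where
  "hcat d Ms = mat_of_cols d (concat (map cols Ms))"

definition vsum :: "nat \<Rightarrow> (nat \<Rightarrow> real vec) \<Rightarrow> nat set \<Rightarrow> real vec" where
  "vsum d f S = vec d (\<lambda>i. \<Sum>s\<in>S. f s $ i)"

definition msum :: "nat \<Rightarrow> nat \<Rightarrow> (nat \<Rightarrow> real mat) \<Rightarrow> nat set \<Rightarrow> real mat" where
  "msum nr nc f S = mat nr nc (\<lambda>(i,j). \<Sum>s\<in>S. f s $$ (i,j))"

fun traj :: "real mat \<Rightarrow> real mat \<Rightarrow> real mat \<Rightarrow> real vec \<Rightarrow> real vec \<Rightarrow>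
             (nat \<Rightarrow> real vec) \<Rightarrow> (nat \<Rightarrow> real vec) \<Rightarrow> nat \<Rightarrow> real vec" where
  "traj A B C w x0 u v 0 = x0"
| "traj A B C w x0 u v (Suc s) =
     A *\<^sub>v traj A B C w x0 u v s + B *\<^sub>v u s + C *\<^sub>v v s + w"

end

theory Submission
  imports Defs "HOL-Library.Set_Algebras"
begin

text \<open>Unrolling the recursion gives the variation-of-constants formula
  x(t) = A^t x(0) + \<Sum>s<t. A^(t-1-s) (B u(s) + C v(s) + w), so x(t) is affine in the initial
  state, the inputs and the disturbances. Substituting the affine parametrisations of x(0), u(s)
  and v(s) = c_V + G_V q(s) writes x(t) as the center plus F_I \<lambda> + \<Sum>s F_s \<rho>(s)
  + \<Sum>s A^(t-1-s) C G_V q(s), where \<lambda>, the \<rho>(s) and the q(s) range independently over unit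
  boxes. Since the zonotope of a horizontally concatenated generator matrix is the Minkowski
  sum of the zonotopes of the blocks, this set is exactly the claimed zonotope.\<close>

lemma mult_mat_of_cols_append:
  assumes a: "a \<in> carrier_vec (length cs1)" and b: "b \<in> carrier_vec (length cs2)"
  shows "mat_of_cols d (cs1 @ cs2) *\<^sub>v (a @\<^sub>v b) = mat_of_cols d cs1 *\<^sub>v a + mat_of_cols d cs2 *\<^sub>v b"
proof (rule eq_vecI)
  fix i assume "i < dim_vec (mat_of_cols d cs1 *\<^sub>v a + mat_of_cols d cs2 *\<^sub>v b)"
  then have i: "i < d" by simp
  have "row (mat_of_cols d (cs1 @ cs2)) i = row (mat_of_cols d cs1) i @\<^sub>v row (mat_of_cols d cs2) i"
    by (rule eq_vecI) (auto simp: mat_of_cols_def nth_append i)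
  with i a b show "(mat_of_cols d (cs1 @ cs2) *\<^sub>v (a @\<^sub>v b)) $ i
      = (mat_of_cols d cs1 *\<^sub>v a + mat_of_cols d cs2 *\<^sub>v b) $ i"
    by (simp, intro scalar_prod_append) (auto simp: mat_of_cols_def)
qed simp

lemma hcat_carrier_mat [simp]: "hcat d Ms \<in> carrier_mat d (sum_list (map dim_col Ms))"
  unfolding hcat_def by (auto simp: length_concat comp_def)

lemma dim_hcat [simp]:
  "dim_row (hcat d Ms) = d" "dim_col (hcat d Ms) = sum_list (map dim_col Ms)"
  using hcat_carrier_mat by blast+

lemma dim_col_hcat_append: "dim_col (hcat d (Ms @ Ns)) = dim_col (hcat d Ms) + dim_col (hcat d Ns)"
  by simp

lemma dim_col_hcat_map:
  "\<forall>s<t. f s \<in> carrier_mat d (n s) \<Longrightarrow> dim_col (hcat d (map f [0..<t])) = (\<Sum>s<t. n s)"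
  by (induction t) auto

lemma dim_col_hcat_blocks:
  assumes "M \<in> carrier_mat d n" and F: "\<forall>s<t. F s \<in> carrier_mat d (m s)"
    and H: "\<forall>s<t. H s \<in> carrier_mat d k"
  shows "dim_col (hcat d ([M] @ map F [0..<t] @ map H [0..<t])) = n + (\<Sum>s<t. m s) + t * k"
  using assms dim_col_hcat_map[OF F] dim_col_hcat_map[OF H]
  unfolding dim_col_hcat_append by simp

lemma hcat_singleton: "M \<in> carrier_mat d n \<Longrightarrow> hcat d [M] = M"
  unfolding hcat_def using mat_of_cols_cols[of M] by auto

lemma mult_hcat_append:
  assumes "a \<in> carrier_vec (dim_col (hcat d Ms))" and "b \<in> carrier_vec (dim_col (hcat d Ns))"
  shows "hcat d (Ms @ Ns) *\<^sub>v (a @\<^sub>v b) = hcat d Ms *\<^sub>v a + hcat d Ns *\<^sub>v b"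
  using assms unfolding hcat_def by (simp add: mult_mat_of_cols_append)

lemma zonotope_unit_box: "zonotope c G = {c + G *\<^sub>v lam | lam. lam \<in> unit_box (dim_col G)}"
  unfolding zonotope_def unit_box_def by auto

lemma all_mem_zonotope_iff:
  "(\<forall>s<t. v s \<in> zonotope c G) \<longleftrightarrow> (\<exists>q. \<forall>s<t. q s \<in> unit_box (dim_col G) \<and> v s = c + G *\<^sub>v q s)"
  unfolding zonotope_unit_box by (auto simp: choice_iff')

lemma unit_box_add: "unit_box (n1 + n2) = {a @\<^sub>v b | a b. a \<in> unit_box n1 \<and> b \<in> unit_box n2}"
proof (intro equalityI subsetI)
  fix lam assume lam: "lam \<in> unit_box (n1 + n2)"
  then have "lam = vec_first lam n1 @\<^sub>v vec_last lam n2"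
    by (simp add: unit_box_def)
  moreover have "vec_first lam n1 \<in> unit_box n1" "vec_last lam n2 \<in> unit_box n2"
    using lam by (auto simp: unit_box_def vec_first_def vec_last_def)
  ultimately show "lam \<in> {a @\<^sub>v b | a b. a \<in> unit_box n1 \<and> b \<in> unit_box n2}" by blast
qed (auto simp: unit_box_def)

lemma zonotope_hcat_Nil: "c \<in> carrier_vec d \<Longrightarrow> zonotope c (hcat d []) = {c}"
proof -
  assume c: "c \<in> carrier_vec d"
  have "hcat d [] *\<^sub>v lam = 0\<^sub>v d" if "lam \<in> carrier_vec 0" for lam :: "real vec"
    using that by (intro eq_vecI) (auto simp: hcat_def mat_of_cols_def scalar_prod_def)
  with c show ?thesis
    by (auto simp: zonotope_unit_box unit_box_def intro!: exI[of _ "0\<^sub>v 0"])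
qed

lemma zonotope_hcat_append:
  assumes c: "c \<in> carrier_vec d"
  shows "zonotope c (hcat d (Ms @ Ns)) = zonotope c (hcat d Ms) + zonotope (0\<^sub>v d) (hcat d Ns)"
proof -
  have "c + hcat d (Ms @ Ns) *\<^sub>v (a @\<^sub>v b) = (c + hcat d Ms *\<^sub>v a) + (0\<^sub>v d + hcat d Ns *\<^sub>v b)"
    if "a \<in> unit_box (dim_col (hcat d Ms))" "b \<in> unit_box (dim_col (hcat d Ns))" for a b
    using that c by (simp add: mult_hcat_append unit_box_def
        carrier_vecI[of "hcat d Ms *\<^sub>v a"] carrier_vecI[of "hcat d Ns *\<^sub>v b"])
  then show ?thesis
    unfolding zonotope_unit_box set_plus_def by (auto simp: unit_box_add) metis
qed

lemma vsum_carrier [simp]: "vsum d f S \<in> carrier_vec d" "dim_vec (vsum d f S) = d"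
  unfolding vsum_def by auto

lemma index_vsum [simp]: "i < d \<Longrightarrow> vsum d f S $ i = (\<Sum>s\<in>S. f s $ i)"
  unfolding vsum_def by simp

lemma vsum_cong: "(\<And>s. s \<in> S \<Longrightarrow> f s = g s) \<Longrightarrow> vsum d f S = vsum d g S"
  unfolding vsum_def by simp

lemma vsum_empty [simp]: "vsum d f {} = 0\<^sub>v d"
  unfolding vsum_def by auto

lemma vsum_add:
  assumes "\<forall>s\<in>S. f s \<in> carrier_vec d" and "\<forall>s\<in>S. g s \<in> carrier_vec d"
  shows "vsum d (\<lambda>s. f s + g s) S = vsum d f S + vsum d g S"
proof -
  have "(f s + g s) $ i = f s $ i + g s $ i" if "s \<in> S" "i < d" for s i
    using assms[rule_format, OF that(1)] that(2) by simp
  then show ?thesis by (intro eq_vecI) (auto simp: sum.distrib[symmetric])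
qed

lemma vsum_lessThan_Suc:
  "f t \<in> carrier_vec d \<Longrightarrow> vsum d f {..<Suc t} = vsum d f {..<t} + f t"
  by (rule eq_vecI) auto

lemma mult_mat_vsum:
  assumes M: "M \<in> carrier_mat n d" and f: "\<And>s. s \<in> S \<Longrightarrow> f s \<in> carrier_vec d"
  shows "M *\<^sub>v vsum d f S = vsum n (\<lambda>s. M *\<^sub>v f s) S"
proof (rule eq_vecI)
  fix i assume "i < dim_vec (vsum n (\<lambda>s. M *\<^sub>v f s) S)"
  then have i: "i < n" by simp
  have "(M *\<^sub>v f s) $ i = (\<Sum>j<d. M $$ (i, j) * f s $ j)" if "s \<in> S" for s
    using M i carrier_vecD[OF f[OF that]] by (simp add: scalar_prod_def lessThan_atLeast0)
  with M i show "(M *\<^sub>v vsum d f S) $ i = vsum n (\<lambda>s. M *\<^sub>v f s) S $ i"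
    by (simp add: scalar_prod_def lessThan_atLeast0 sum_distrib_left sum.swap[of _ S])
qed (use M in simp)

lemma msum_carrier [simp]: "msum nr nc f S \<in> carrier_mat nr nc"
  unfolding msum_def by auto

lemma dim_msum [simp]: "dim_row (msum nr nc f S) = nr" "dim_col (msum nr nc f S) = nc"
  unfolding msum_def by auto

lemma msum_mult_mat_vec:
  assumes f: "\<And>s. s \<in> S \<Longrightarrow> f s \<in> carrier_mat nr nc" and x: "x \<in> carrier_vec nc"
  shows "msum nr nc f S *\<^sub>v x = vsum nr (\<lambda>s. f s *\<^sub>v x) S"
proof (rule eq_vecI)
  fix i assume "i < dim_vec (vsum nr (\<lambda>s. f s *\<^sub>v x) S)"
  then have i: "i < nr" by simp
  have "(f s *\<^sub>v x) $ i = (\<Sum>j<nc. f s $$ (i, j) * x $ j)" if "s \<in> S" for s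
    using x i carrier_matD[OF f[OF that]] by (simp add: scalar_prod_def lessThan_atLeast0)
  with x i show "(msum nr nc f S *\<^sub>v x) $ i = vsum nr (\<lambda>s. f s *\<^sub>v x) S $ i"
    by (simp add: msum_def scalar_prod_def lessThan_atLeast0 sum_distrib_right sum.swap[of _ S])
qed (simp add: msum_def)

lemma vsum_choices_lessThan_Suc:
  assumes "f t \<in> carrier_mat d n"
  shows "{vsum d (\<lambda>s. f s *\<^sub>v r s) {..<Suc t} | r. \<forall>s<Suc t. r s \<in> U s}
    = {vsum d (\<lambda>s. f s *\<^sub>v r s) {..<t} + f t *\<^sub>v q | r q. (\<forall>s<t. r s \<in> U s) \<and> q \<in> U t}"
proof -
  have split: "vsum d (\<lambda>s. f s *\<^sub>v r s) {..<Suc t} = vsum d (\<lambda>s. f s *\<^sub>v r s) {..<t} + f t *\<^sub>v r t"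
    for r using assms by (intro vsum_lessThan_Suc carrier_vecI) simp
  show ?thesis
  proof (intro equalityI subsetI)
    fix z assume "z \<in> {vsum d (\<lambda>s. f s *\<^sub>v r s) {..<Suc t} | r. \<forall>s<Suc t. r s \<in> U s}"
    then show "z \<in> {vsum d (\<lambda>s. f s *\<^sub>v r s) {..<t} + f t *\<^sub>v q | r q. (\<forall>s<t. r s \<in> U s) \<and> q \<in> U t}"
      unfolding split by fastforce
  next
    fix z assume "z \<in> {vsum d (\<lambda>s. f s *\<^sub>v r s) {..<t} + f t *\<^sub>v q | r q. (\<forall>s<t. r s \<in> U s) \<and> q \<in> U t}"
    then obtain r q where z: "z = vsum d (\<lambda>s. f s *\<^sub>v r s) {..<t} + f t *\<^sub>v q"
      and r: "\<forall>s<t. r s \<in> U s" and q: "q \<in> U t" by blast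
    have "vsum d (\<lambda>s. f s *\<^sub>v (r(t := q)) s) {..<t} = vsum d (\<lambda>s. f s *\<^sub>v r s) {..<t}"
      by (rule vsum_cong) simp
    then have "z = vsum d (\<lambda>s. f s *\<^sub>v (r(t := q)) s) {..<Suc t}"
      unfolding z split by simp
    moreover have "\<forall>s<Suc t. (r(t := q)) s \<in> U s"
      using r q by (simp add: less_Suc_eq)
    ultimately show "z \<in> {vsum d (\<lambda>s. f s *\<^sub>v r s) {..<Suc t} | r. \<forall>s<Suc t. r s \<in> U s}"
      by blast
  qed
qed

lemma zonotope_hcat_map:
  assumes "\<forall>s<t. f s \<in> carrier_mat d (n s)"
  shows "zonotope (0\<^sub>v d) (hcat d (map f [0..<t]))
    = {vsum d (\<lambda>s. f s *\<^sub>v r s) {..<t} | r. \<forall>s<t. r s \<in> unit_box (n s)}"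
  using assms
proof (induction t)
  case 0
  then show ?case by (simp add: zonotope_hcat_Nil)
next
  case (Suc t)
  have ft: "f t \<in> carrier_mat d (n t)" using Suc.prems by simp
  then have "zonotope (0\<^sub>v d) (hcat d (map f [0..<Suc t]))
      = zonotope (0\<^sub>v d) (hcat d (map f [0..<t])) + zonotope (0\<^sub>v d) (f t)"
    by (simp add: zonotope_hcat_append hcat_singleton)
  also have "\<dots> = {vsum d (\<lambda>s. f s *\<^sub>v r s) {..<t} + f t *\<^sub>v q
      | r q. (\<forall>s<t. r s \<in> unit_box (n s)) \<and> q \<in> unit_box (n t)}"
  proof -
    have "zonotope (0\<^sub>v d) (f t) = {f t *\<^sub>v q | q. q \<in> unit_box (n t)}"
      using ft by (auto simp: zonotope_unit_box carrier_vecI[of "f t *\<^sub>v _"])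
    with Suc show ?thesis
      unfolding set_plus_def by auto
  qed
  also have "\<dots> = {vsum d (\<lambda>s. f s *\<^sub>v r s) {..<Suc t} | r. \<forall>s<Suc t. r s \<in> unit_box (n s)}"
    by (rule vsum_choices_lessThan_Suc[of f t, OF ft, symmetric])
  finally show ?case .
qed

lemma mem_zonotope_hcat_blocks:
  assumes c: "c \<in> carrier_vec d" and M: "M \<in> carrier_mat d n"
    and F: "\<forall>s<t. F s \<in> carrier_mat d (m s)" and H: "\<forall>s<t. H s \<in> carrier_mat d k"
  shows "z \<in> zonotope c (hcat d ([M] @ map F [0..<t] @ map H [0..<t]))
    \<longleftrightarrow> (\<exists>lam r q. z = (c + M *\<^sub>v lam)
            + (vsum d (\<lambda>s. F s *\<^sub>v r s) {..<t} + vsum d (\<lambda>s. H s *\<^sub>v q s) {..<t})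
          \<and> lam \<in> unit_box n \<and> (\<forall>s<t. r s \<in> unit_box (m s)) \<and> (\<forall>s<t. q s \<in> unit_box k))"
proof -
  have "zonotope c (hcat d ([M] @ map F [0..<t] @ map H [0..<t]))
      = zonotope c M + (zonotope (0\<^sub>v d) (hcat d (map F [0..<t]))
                        + zonotope (0\<^sub>v d) (hcat d (map H [0..<t])))"
    unfolding zonotope_hcat_append[OF c] zonotope_hcat_append[OF zero_carrier_vec] hcat_singleton[OF M] ..
  then show ?thesis
    unfolding zonotope_hcat_map[OF F] zonotope_hcat_map[OF H] zonotope_unit_box[of c]
      carrier_matD(2)[OF M] set_plus_def
    by blast
qed

lemma pow_mat_Suc_left: "A \<in> carrier_mat n n \<Longrightarrow> A ^\<^sub>m Suc k = A * A ^\<^sub>m k"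
proof (induction k)
  case (Suc k)
  then have "A ^\<^sub>m Suc (Suc k) = (A * A ^\<^sub>m k) * A" by simp
  also have "\<dots> = A * A ^\<^sub>m Suc k" using Suc.prems by (simp add: assoc_mult_mat[of _ n n _ n _ n])
  finally show ?case .
qed simp

lemma traj_closed_form:
  assumes A: "A \<in> carrier_mat d d" and B: "B \<in> carrier_mat d du" and C: "C \<in> carrier_mat d dv"
    and w: "w \<in> carrier_vec d" and x0: "x0 \<in> carrier_vec d"
    and u: "\<forall>s<t. u s \<in> carrier_vec du" and v: "\<forall>s<t. v s \<in> carrier_vec dv"
  shows "traj A B C w x0 u v t = (A ^\<^sub>m t) *\<^sub>v x0
     + vsum d (\<lambda>s. (A ^\<^sub>m (t - 1 - s)) *\<^sub>v (B *\<^sub>v u s + C *\<^sub>v v s + w)) {..<t}"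
  using u v
proof (induction t)
  case 0
  with A x0 show ?case by simp
next
  case (Suc t)
  define g where "g s = B *\<^sub>v u s + C *\<^sub>v v s + w" for s
  have g: "g s \<in> carrier_vec d" if "s < Suc t" for s
    using Suc.prems that B C w unfolding g_def by auto
  have IH: "traj A B C w x0 u v t = (A ^\<^sub>m t) *\<^sub>v x0 + vsum d (\<lambda>s. (A ^\<^sub>m (t - 1 - s)) *\<^sub>v g s) {..<t}"
    using Suc unfolding g_def by simp
  have Ax0: "A ^\<^sub>m t *\<^sub>v x0 \<in> carrier_vec d" and Ag: "\<forall>s<t. A ^\<^sub>m (t - 1 - s) *\<^sub>v g s \<in> carrier_vec d"
    using A x0 g by (auto intro: mult_mat_vec_carrier[OF pow_carrier_mat])
  have "traj A B C w x0 u v t \<in> carrier_vec d"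
    unfolding IH using Ax0 by simp
  then have "traj A B C w x0 u v (Suc t) = A *\<^sub>v traj A B C w x0 u v t + g t"
    using A B C w Suc.prems unfolding g_def by (intro eq_vecI) auto
  also have "A *\<^sub>v traj A B C w x0 u v t
      = A *\<^sub>v (A ^\<^sub>m t *\<^sub>v x0) + vsum d (\<lambda>s. A *\<^sub>v (A ^\<^sub>m (t - 1 - s) *\<^sub>v g s)) {..<t}"
    unfolding IH mult_add_distrib_mat_vec[OF A Ax0 vsum_carrier(1)] using Ag
    by (subst mult_mat_vsum[OF A]) auto
  also have "\<dots> = (A ^\<^sub>m Suc t) *\<^sub>v x0 + vsum d (\<lambda>s. A ^\<^sub>m (Suc t - 1 - s) *\<^sub>v g s) {..<t}"
  proof (intro arg_cong2[where f = "(+)"] vsum_cong)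
    fix s assume "s \<in> {..<t}"
    then have "Suc t - 1 - s = Suc (t - 1 - s)" and "g s \<in> carrier_vec d" using g by auto
    then show "A *\<^sub>v (A ^\<^sub>m (t - 1 - s) *\<^sub>v g s) = A ^\<^sub>m (Suc t - 1 - s) *\<^sub>v g s"
      by (simp only: pow_mat_Suc_left[OF A] assoc_mult_mat_vec[OF A pow_carrier_mat[OF A]])
  qed (simp only: pow_mat_Suc_left[OF A] assoc_mult_mat_vec[OF A pow_carrier_mat[OF A] x0])
  also have "\<dots> + g t = (A ^\<^sub>m Suc t) *\<^sub>v x0 + vsum d (\<lambda>s. A ^\<^sub>m (Suc t - 1 - s) *\<^sub>v g s) {..<Suc t}"
    using A g[of t] mult_mat_vec_carrier[OF pow_carrier_mat[OF A] x0, of "Suc t"]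
    by (simp add: vsum_lessThan_Suc)
  finally show ?case unfolding g_def .
qed

lemma mult_mat_vec_affine_input_split:
  assumes M: "M \<in> carrier_mat n dx" and B: "B \<in> carrier_mat dx du" and C: "C \<in> carrier_mat dx dv"
    and w: "w \<in> carrier_vec dx" and b: "b \<in> carrier_vec du" and c: "c \<in> carrier_vec dv"
    and P: "P \<in> carrier_mat du k1" and x: "x \<in> carrier_vec k1"
    and Q: "Q \<in> carrier_mat du k2" and y: "y \<in> carrier_vec k2"
    and R: "R \<in> carrier_mat dv k3" and z: "z \<in> carrier_vec k3"
  shows "M *\<^sub>v (B *\<^sub>v (b + P *\<^sub>v x + Q *\<^sub>v y) + C *\<^sub>v (c + R *\<^sub>v z) + w)
    = M *\<^sub>v (B *\<^sub>v b + C *\<^sub>v c + w)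
      + ((M * B * P) *\<^sub>v x + ((M * B * Q) *\<^sub>v y + (M * C * R) *\<^sub>v z))"
proof -
  have Px: "P *\<^sub>v x \<in> carrier_vec du" and Qy: "Q *\<^sub>v y \<in> carrier_vec du"
    and Rz: "R *\<^sub>v z \<in> carrier_vec dv"
    using P x Q y R z by simp_all
  have "(M * B * P) *\<^sub>v x = M *\<^sub>v (B *\<^sub>v (P *\<^sub>v x))"
    "(M * B * Q) *\<^sub>v y = M *\<^sub>v (B *\<^sub>v (Q *\<^sub>v y))"
    "(M * C * R) *\<^sub>v z = M *\<^sub>v (C *\<^sub>v (R *\<^sub>v z))"
    using M B C P Q R
    by (simp_all add: assoc_mult_mat_vec[OF M mult_carrier_mat[OF B P] x] assoc_mult_mat_vec[OF B P x]
        assoc_mult_mat_vec[OF M mult_carrier_mat[OF B Q] y] assoc_mult_mat_vec[OF B Q y]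
        assoc_mult_mat_vec[OF M mult_carrier_mat[OF C R] z] assoc_mult_mat_vec[OF C R z])
  moreover have "B *\<^sub>v (b + P *\<^sub>v x + Q *\<^sub>v y) + C *\<^sub>v (c + R *\<^sub>v z) + w
      = (B *\<^sub>v b + C *\<^sub>v c + w) + (B *\<^sub>v (P *\<^sub>v x) + (B *\<^sub>v (Q *\<^sub>v y) + C *\<^sub>v (R *\<^sub>v z)))"
    using b c Px Qy Rz carrier_matD[OF B] carrier_matD[OF C] carrier_vecD[OF w]
    by (intro eq_vecI) (simp_all add: mult_add_distrib_mat_vec[OF B] mult_add_distrib_mat_vec[OF C] algebra_simps)
  ultimately show ?thesis
    using B C w b c Px Qy Rz by (simp add: mult_add_distrib_mat_vec[OF M])
qed

lemma traj_affine_inputs: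
  assumes A: "A \<in> carrier_mat dx dx" and B: "B \<in> carrier_mat dx du" and C: "C \<in> carrier_mat dx dv"
    and w: "w \<in> carrier_vec dx" and cV: "cV \<in> carrier_vec dv" and GV: "GV \<in> carrier_mat dv nV"
    and alpha: "alpha \<in> carrier_vec dx" and G0: "G0 \<in> carrier_mat dx nI"
    and beta: "\<forall>s<t. beta s \<in> carrier_vec du" and Phi: "\<forall>s<t. Phi s \<in> carrier_mat du nI"
    and Gu: "\<forall>s<t. Gu s \<in> carrier_mat du (m s)"
    and lam: "lam \<in> carrier_vec nI" and rho: "\<forall>s<t. rho s \<in> carrier_vec (m s)"
    and q: "\<forall>s<t. q s \<in> carrier_vec nV" and v: "\<forall>s<t. v s = cV + GV *\<^sub>v q s"
  shows "traj A B C w (alpha + G0 *\<^sub>v lam) (\<lambda>s. beta s + Phi s *\<^sub>v lam + Gu s *\<^sub>v rho s) v t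
    = (A ^\<^sub>m t *\<^sub>v alpha + vsum dx (\<lambda>s. A ^\<^sub>m (t - 1 - s) *\<^sub>v (B *\<^sub>v beta s + C *\<^sub>v cV + w)) {..<t})
      + (A ^\<^sub>m t * G0 + msum dx nI (\<lambda>s. A ^\<^sub>m (t - 1 - s) * B * Phi s) {..<t}) *\<^sub>v lam
      + (vsum dx (\<lambda>s. (A ^\<^sub>m (t - 1 - s) * B * Gu s) *\<^sub>v rho s) {..<t}
         + vsum dx (\<lambda>s. (A ^\<^sub>m (t - 1 - s) * C * GV) *\<^sub>v q s) {..<t})"
proof -
  define P where "P s = A ^\<^sub>m (t - 1 - s)" for s
  define a where "a s = P s *\<^sub>v (B *\<^sub>v beta s + C *\<^sub>v cV + w)" for s
  define p where "p s = (P s * B * Phi s) *\<^sub>v lam" for s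
  define f where "f s = (P s * B * Gu s) *\<^sub>v rho s" for s
  define h where "h s = (P s * C * GV) *\<^sub>v q s" for s
  let ?M = "msum dx nI (\<lambda>s. P s * B * Phi s) {..<t}"
  have carriers: "a s \<in> carrier_vec dx" "p s \<in> carrier_vec dx" "f s \<in> carrier_vec dx"
    "h s \<in> carrier_vec dx" for s
    unfolding a_def p_def f_def h_def P_def using A by (auto intro!: carrier_vecI)
  have sum_p: "vsum dx p {..<t} = ?M *\<^sub>v lam"
    unfolding p_def P_def using Phi lam
    by (intro msum_mult_mat_vec[symmetric]) (auto intro: mult_carrier_mat[OF mult_carrier_mat[OF pow_carrier_mat[OF A] B]])
  have "traj A B C w (alpha + G0 *\<^sub>v lam) (\<lambda>s. beta s + Phi s *\<^sub>v lam + Gu s *\<^sub>v rho s) v t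
      = A ^\<^sub>m t *\<^sub>v (alpha + G0 *\<^sub>v lam) + vsum dx (\<lambda>s. a s + (p s + (f s + h s))) {..<t}"
  proof -
    have x0: "alpha + G0 *\<^sub>v lam \<in> carrier_vec dx"
      using alpha G0 lam by simp
    have u: "\<forall>s<t. beta s + Phi s *\<^sub>v lam + Gu s *\<^sub>v rho s \<in> carrier_vec du"
      using beta Phi Gu lam rho by (blast intro: add_carrier_vec mult_mat_vec_carrier)
    have v': "\<forall>s<t. v s \<in> carrier_vec dv"
      using v q cV GV by auto
    have "vsum dx (\<lambda>s. A ^\<^sub>m (t - 1 - s) *\<^sub>v (B *\<^sub>v (beta s + Phi s *\<^sub>v lam + Gu s *\<^sub>v rho s)
        + C *\<^sub>v v s + w)) {..<t} = vsum dx (\<lambda>s. a s + (p s + (f s + h s))) {..<t}"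
      using beta Phi Gu rho q v unfolding a_def p_def f_def h_def P_def
      by (intro vsum_cong) (auto intro: mult_mat_vec_affine_input_split[OF pow_carrier_mat[OF A] B C w _ cV _ lam _ _ GV])
    then show ?thesis
      unfolding traj_closed_form[OF A B C w x0 u v'] by simp
  qed
  also have "\<dots> = (A ^\<^sub>m t *\<^sub>v alpha + (A ^\<^sub>m t * G0) *\<^sub>v lam)
      + (vsum dx a {..<t} + (?M *\<^sub>v lam + (vsum dx f {..<t} + vsum dx h {..<t})))"
    using carriers alpha G0 lam
    by (simp add: sum_p vsum_add mult_add_distrib_mat_vec[OF pow_carrier_mat[OF A]]
        assoc_mult_mat_vec[OF pow_carrier_mat[OF A] G0])
  also have "\<dots> = (A ^\<^sub>m t *\<^sub>v alpha + vsum dx a {..<t})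
      + ((A ^\<^sub>m t * G0) *\<^sub>v lam + ?M *\<^sub>v lam) + (vsum dx f {..<t} + vsum dx h {..<t})"
    using carrier_matD[OF A] carrier_matD[OF G0] carrier_vecD[OF alpha]
    by (intro eq_vecI) (simp_all add: algebra_simps)
  also have "(A ^\<^sub>m t * G0) *\<^sub>v lam + ?M *\<^sub>v lam = (A ^\<^sub>m t * G0 + ?M) *\<^sub>v lam"
    by (rule add_mult_distrib_mat_vec[OF mult_carrier_mat[OF pow_carrier_mat[OF A] G0] msum_carrier lam, symmetric])
  finally show ?thesis
    unfolding a_def f_def h_def P_def .
qed

lemma reach_set_eq_zonotope:
  assumes A: "A \<in> carrier_mat dx dx" and B: "B \<in> carrier_mat dx du" and C: "C \<in> carrier_mat dx dv"
    and w: "w \<in> carrier_vec dx" and cV: "cV \<in> carrier_vec dv" and GV: "GV \<in> carrier_mat dv nV"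
    and alpha: "alpha \<in> carrier_vec dx" and G0: "G0 \<in> carrier_mat dx nI"
    and beta: "\<forall>s<t. beta s \<in> carrier_vec du" and Phi: "\<forall>s<t. Phi s \<in> carrier_mat du nI"
    and Gu: "\<forall>s<t. Gu s \<in> carrier_mat du (m s)"
  shows "{traj A B C w (alpha + G0 *\<^sub>v lam) (\<lambda>s. beta s + Phi s *\<^sub>v lam + Gu s *\<^sub>v rho s) v t
          | lam rho v. lam \<in> unit_box nI \<and> (\<forall>s<t. rho s \<in> unit_box (m s))
              \<and> (\<forall>s<t. v s \<in> zonotope cV GV)}
    = zonotope (A ^\<^sub>m t *\<^sub>v alpha + vsum dx (\<lambda>s. A ^\<^sub>m (t - 1 - s) *\<^sub>v (B *\<^sub>v beta s + C *\<^sub>v cV + w)) {..<t})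
        (hcat dx ([A ^\<^sub>m t * G0 + msum dx nI (\<lambda>s. A ^\<^sub>m (t - 1 - s) * B * Phi s) {..<t}]
                  @ map (\<lambda>s. A ^\<^sub>m (t - 1 - s) * B * Gu s) [0..<t]
                  @ map (\<lambda>s. A ^\<^sub>m (t - 1 - s) * C * GV) [0..<t]))
    \<and> dim_col (hcat dx ([A ^\<^sub>m t * G0 + msum dx nI (\<lambda>s. A ^\<^sub>m (t - 1 - s) * B * Phi s) {..<t}]
                  @ map (\<lambda>s. A ^\<^sub>m (t - 1 - s) * B * Gu s) [0..<t]
                  @ map (\<lambda>s. A ^\<^sub>m (t - 1 - s) * C * GV) [0..<t]))
      = nI + (\<Sum>s<t. m s) + t * nV"
    (is "?reach = zonotope ?c ?G \<and> dim_col ?G = _")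
proof
  let ?FI = "A ^\<^sub>m t * G0 + msum dx nI (\<lambda>s. A ^\<^sub>m (t - 1 - s) * B * Phi s) {..<t}"
  let ?F = "\<lambda>s. A ^\<^sub>m (t - 1 - s) * B * Gu s" and ?H = "\<lambda>s. A ^\<^sub>m (t - 1 - s) * C * GV"
  have c: "?c \<in> carrier_vec dx" and FI: "?FI \<in> carrier_mat dx nI"
    using A G0 mult_mat_vec_carrier[OF pow_carrier_mat[OF A] alpha] by auto
  have F: "\<forall>s<t. ?F s \<in> carrier_mat dx (m s)"
    using Gu by (auto intro: mult_carrier_mat[OF mult_carrier_mat[OF pow_carrier_mat[OF A] B]])
  have H: "\<forall>s<t. ?H s \<in> carrier_mat dx nV"
    using A C GV by auto
  show "dim_col ?G = nI + (\<Sum>s<t. m s) + t * nV"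
    by (rule dim_col_hcat_blocks[OF FI F H])
  have traj: "traj A B C w (alpha + G0 *\<^sub>v lam) (\<lambda>s. beta s + Phi s *\<^sub>v lam + Gu s *\<^sub>v rho s) v t
      = (?c + ?FI *\<^sub>v lam)
        + (vsum dx (\<lambda>s. ?F s *\<^sub>v rho s) {..<t} + vsum dx (\<lambda>s. ?H s *\<^sub>v q s) {..<t})"
    if "lam \<in> unit_box nI" "\<forall>s<t. rho s \<in> unit_box (m s)"
      "\<forall>s<t. q s \<in> unit_box nV \<and> v s = cV + GV *\<^sub>v q s" for lam rho q v
    using that by (intro traj_affine_inputs[OF A B C w cV GV alpha G0 beta Phi Gu]) (auto simp: unit_box_def)
  note zonotope_iff = mem_zonotope_hcat_blocks[OF c FI F H]
    and disturbance_iff = all_mem_zonotope_iff[of t _ cV GV, unfolded carrier_matD(2)[OF GV]]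
  show "?reach = zonotope ?c ?G"
  proof (intro equalityI subsetI)
    fix z assume "z \<in> ?reach"
    then obtain lam rho v q where "z = traj A B C w (alpha + G0 *\<^sub>v lam)
          (\<lambda>s. beta s + Phi s *\<^sub>v lam + Gu s *\<^sub>v rho s) v t"
      and "lam \<in> unit_box nI" "\<forall>s<t. rho s \<in> unit_box (m s)"
      and "\<forall>s<t. q s \<in> unit_box nV \<and> v s = cV + GV *\<^sub>v q s"
      unfolding disturbance_iff by blast
    with traj show "z \<in> zonotope ?c ?G"
      unfolding zonotope_iff by blast
  next
    fix z assume "z \<in> zonotope ?c ?G"
    then obtain lam rho q where z: "z = (?c + ?FI *\<^sub>v lam)
          + (vsum dx (\<lambda>s. ?F s *\<^sub>v rho s) {..<t} + vsum dx (\<lambda>s. ?H s *\<^sub>v q s) {..<t})"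
      and lam: "lam \<in> unit_box nI" and rho: "\<forall>s<t. rho s \<in> unit_box (m s)"
      and q: "\<forall>s<t. q s \<in> unit_box nV"
      unfolding zonotope_iff by blast
    have "\<forall>s<t. cV + GV *\<^sub>v q s \<in> zonotope cV GV"
      unfolding disturbance_iff using q by blast
    moreover have "z = traj A B C w (alpha + G0 *\<^sub>v lam)
        (\<lambda>s. beta s + Phi s *\<^sub>v lam + Gu s *\<^sub>v rho s) (\<lambda>s. cV + GV *\<^sub>v q s) t"
      unfolding z using traj[of lam rho q "\<lambda>s. cV + GV *\<^sub>v q s"] lam rho q by simp
    ultimately show "z \<in> ?reach"
      using lam rho by blast
  qed
qed

lemma diag_of_vec_carrier: "g \<in> carrier_vec n \<Longrightarrow> diag_of_vec g \<in> carrier_mat n n"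
  unfolding diag_of_vec_def by auto

theorem proposition6p1:
  fixes dx du dv nV nI t :: nat and m :: "nat \<Rightarrow> nat"
    and A B C GV GI :: "real mat" and w cV alpha gamma :: "real vec"
    and beta psi :: "nat \<Rightarrow> real vec" and Phi GF :: "nat \<Rightarrow> real mat"
  assumes A: "A \<in> carrier_mat dx dx"
    and B: "B \<in> carrier_mat dx du"
    and C: "C \<in> carrier_mat dx dv"
    and w: "w \<in> carrier_vec dx"
    and cV: "cV \<in> carrier_vec dv"
    and GV: "GV \<in> carrier_mat dv nV"
    and GI: "GI \<in> carrier_mat dx nI"
    and alpha: "alpha \<in> carrier_vec dx"
    and gamma: "gamma \<in> carrier_vec nI" "\<forall>j < nI. gamma $ j \<ge> 0"
    and beta: "\<forall>s < t. beta s \<in> carrier_vec du"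
    and Phi: "\<forall>s < t. Phi s \<in> carrier_mat du nI"
    and GF: "\<forall>s < t. GF s \<in> carrier_mat du (m s)"
    and psi: "\<forall>s < t. psi s \<in> carrier_vec (m s) \<and> (\<forall>j < m s. psi s $ j \<ge> 0)"
  shows
    "let Gamma = diag_of_vec gamma;
         Psi = (\<lambda>s. diag_of_vec (psi s));
         reach = {traj A B C w (alpha + (GI * Gamma) *\<^sub>v lam)
                      (\<lambda>s. beta s + Phi s *\<^sub>v lam + (GF s * Psi s) *\<^sub>v rho s) v t
                  | lam rho v. lam \<in> unit_box nI
                       \<and> (\<forall>s < t. rho s \<in> unit_box (m s))
                       \<and> (\<forall>s < t. v s \<in> zonotope cV GV)};
         center = (A ^\<^sub>m t) *\<^sub>v alpha
                  + vsum dx (\<lambda>s. (A ^\<^sub>m (t - 1 - s)) *\<^sub>v (B *\<^sub>v beta s + C *\<^sub>v cV + w)) {..<t};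
         FI = (A ^\<^sub>m t) * GI * Gamma
              + msum dx nI (\<lambda>s. (A ^\<^sub>m (t - 1 - s)) * B * Phi s) {..<t};
         F = (\<lambda>s. (A ^\<^sub>m (t - 1 - s)) * B * GF s * Psi s);
         G = hcat dx ([FI] @ map F [0..<t]
                       @ map (\<lambda>s. (A ^\<^sub>m (t - 1 - s)) * C * GV) [0..<t])
     in reach = zonotope center G
        \<and> dim_col G = nI + (\<Sum>s<t. m s) + t * nV"
proof -
  have Gamma: "diag_of_vec gamma \<in> carrier_mat nI nI"
    using gamma(1) by (rule diag_of_vec_carrier)
  have Psi: "\<forall>s<t. diag_of_vec (psi s) \<in> carrier_mat (m s) (m s)"
    using psi by (simp add: diag_of_vec_carrier)
  have GF_Psi: "\<forall>s<t. GF s * diag_of_vec (psi s) \<in> carrier_mat du (m s)"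
    using GF Psi mult_carrier_mat by blast
  have FI_assoc: "A ^\<^sub>m t * GI * diag_of_vec gamma = A ^\<^sub>m t * (GI * diag_of_vec gamma)"
    by (rule assoc_mult_mat[OF pow_carrier_mat[OF A] GI Gamma])
  have F_assoc: "map (\<lambda>s. A ^\<^sub>m (t - 1 - s) * B * GF s * diag_of_vec (psi s)) [0..<t]
      = map (\<lambda>s. A ^\<^sub>m (t - 1 - s) * B * (GF s * diag_of_vec (psi s))) [0..<t]"
  proof (rule map_cong[OF refl])
    fix s assume "s \<in> set [0..<t]"
    then have s: "s < t" by simp
    show "A ^\<^sub>m (t - 1 - s) * B * GF s * diag_of_vec (psi s)
        = A ^\<^sub>m (t - 1 - s) * B * (GF s * diag_of_vec (psi s))"
      by (rule assoc_mult_mat[OF mult_carrier_mat[OF pow_carrier_mat[OF A] B]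
            GF[rule_format, OF s] Psi[rule_format, OF s]])
  qed
  show ?thesis
    unfolding Let_def FI_assoc F_assoc
    using GI Gamma
    by (intro reach_set_eq_zonotope[OF A B C w cV GV alpha _ beta Phi GF_Psi]) simp
qed

end
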